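(* Let $p \in (0,\frac{1}{2})$, let $S=\{1,\dots,n\}$ and let $x,y \in S$ with $x<y$. Let $A$ be any (possibly randomized) algorithm. On a random instance, the probability that $A$ returns a permutation in which $x$ and $y$ appear in the wrong relative order is at least $\frac{1}{2}\left(\frac{p}{1-p}\right)^{2(y-x)-1}$.
   Context: A random instance consists of an input permutation of $S$ chosen uniformly at random together with comparison outcomes: for each pair $i<j$ independently, the comparison reports the wrong order with probability exactly $p$ and the correct order otherwise; outcomes are persistent (repeated comparisons of the same pair always return the same outcome). The algorithm accesses elements only via these comparisons and outputs a permutation of $S$. *)

theory Defs
  imports "HOL-Probability.Probability"
begin

text \<open>The ground set is S = {1..n}; element value v has true rank v.
  The hidden input order is a uniformly random permutation pi of {1..n}:
  the item at input position a (a in {1..n}) is the element pi a.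
  The algorithm only sees positions, and comparison outcomes between them.\<close>

definition pairs :: "nat \<Rightarrow> (nat \<times> nat) set" where
  "pairs n = {(i, j). 1 \<le> i \<and> i < j \<and> j \<le> n}"

text \<open>Noise: for each pair i < j of elements independently, flip i j = True
  (the comparison reports the wrong order) with probability exactly p.
  Outcomes are persistent since they are a fixed function of the pair.\<close>

definition noise_pmf :: "nat \<Rightarrow> real \<Rightarrow> (nat \<times> nat \<Rightarrow> bool) pmf" where
  "noise_pmf n p = Pi_pmf (pairs n) False (\<lambda>_. bernoulli_pmf p)"

definition input_pmf :: "nat \<Rightarrow> (nat \<Rightarrow> nat) pmf" where
  "input_pmf n = pmf_of_set {\<pi>. \<pi> permutes {1..n}}"

text \<open>Observed comparison between input positions a and b:
  True means "the comparison reports the item at a as smaller than the item at b".\<close>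

definition observed :: "nat \<Rightarrow> (nat \<Rightarrow> nat) \<Rightarrow> (nat \<times> nat \<Rightarrow> bool) \<Rightarrow> nat \<Rightarrow> nat \<Rightarrow> bool" where
  "observed n \<pi> flip a b =
     (a \<in> {1..n} \<and> b \<in> {1..n} \<and> a \<noteq> b \<and>
      (if \<pi> a < \<pi> b then \<not> flip (\<pi> a, \<pi> b) else flip (\<pi> b, \<pi> a)))"

definition wrong_order :: "nat list \<Rightarrow> nat \<Rightarrow> nat \<Rightarrow> bool" where
  "wrong_order xs x y = (\<exists>i j. i < j \<and> j < length xs \<and> xs ! i = y \<and> xs ! j = x)"

text \<open>A (possibly randomized) algorithm: since outcomes are persistent, any
  adaptive comparison-based algorithm's output distribution is a function of the
  full table of observed comparison outcomes between positions; it outputs an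
  ordering of the input positions (a list that is a permutation of {1..n}).\<close>

definition error_prob ::
  "nat \<Rightarrow> real \<Rightarrow> ((nat \<Rightarrow> nat \<Rightarrow> bool) \<Rightarrow> nat list pmf) \<Rightarrow> nat \<Rightarrow> nat \<Rightarrow> real" where
  "error_prob n p A x y =
     measure_pmf.prob
       (do { \<pi> \<leftarrow> input_pmf n;
             flip \<leftarrow> noise_pmf n p;
             out \<leftarrow> A (observed n \<pi> flip);
             return_pmf (wrong_order (map \<pi> out) x y) })
       {True}"

end

theory Submission
  imports Defs
begin

(* Swap the values x and y in the hidden input and relabel the noise so that every comparison
  between input positions reports exactly what it reported before: the algorithm cannot
  distinguish the two instances, but on the swapped one its output has x and y in the opposite
  order. The swap is an involution on instances, and it changes the noise only on the pairs
  whose order the transposition reverses, at most 2(y - x) - 1 of them, each change costing a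
  factor of at most p/(1 - p) in probability. With r = (p/(1 - p))^(2(y - x) - 1) and e the
  error probability this gives e >= r (1 - e), hence e >= r/(1 + r) >= r/2. *)

lemma wrong_order_iff_index_less:
  assumes "distinct xs" "i < length xs" "j < length xs" "xs ! i = x" "xs ! j = y" "x \<noteq> y"
  shows "wrong_order xs x y \<longleftrightarrow> j < i"
proof
  assume "wrong_order xs x y"
  then obtain i' j' where "i' < j'" "j' < length xs" "xs ! i' = y" "xs ! j' = x"
    unfolding wrong_order_def by blast
  with assms have "i' = j" "j' = i"
    using nth_eq_iff_index_eq[OF assms(1)] by (metis order.strict_trans)+
  with \<open>i' < j'\<close> show "j < i" by simp
qed (use assms in \<open>auto simp: wrong_order_def\<close>)

lemma wrong_order_map_transpose:
  assumes "distinct xs" "x \<in> set xs" "y \<in> set xs" "x \<noteq> y"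
  shows "wrong_order (map (Transposition.transpose x y) xs) x y \<longleftrightarrow> \<not> wrong_order xs x y"
proof -
  obtain i j where ij: "i < length xs" "xs ! i = x" "j < length xs" "xs ! j = y"
    using assms(2,3) by (metis in_set_conv_nth)
  with assms have "i \<noteq> j" by auto
  have "distinct (map (Transposition.transpose x y) xs)"
    using assms(1) by (simp add: distinct_map)
  then have "wrong_order (map (Transposition.transpose x y) xs) x y \<longleftrightarrow> i < j"
    by (rule wrong_order_iff_index_less) (use ij assms in auto)
  moreover have "wrong_order xs x y \<longleftrightarrow> j < i"
    by (rule wrong_order_iff_index_less) (use ij assms in auto)
  ultimately show ?thesis using \<open>i \<noteq> j\<close> by auto
qed

lemma pmf_map_pmf_True_complement:
  assumes "\<And>w. w \<in> set_pmf M \<Longrightarrow> Q w \<longleftrightarrow> \<not> P w"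
  shows "pmf (map_pmf Q M) True = 1 - pmf (map_pmf P M) True"
proof -
  have "map_pmf Q M = map_pmf Not (map_pmf P M)"
    using assms by (auto simp: pmf.map_comp intro: map_pmf_cong)
  then have "pmf (map_pmf Q M) True = pmf (map_pmf P M) False"
    using pmf_map_inj'[of Not "map_pmf P M" False] by (simp add: inj_def)
  moreover have "(\<Sum>b\<in>UNIV. pmf (map_pmf P M) b) = 1"
    by (rule sum_pmf_eq_1) auto
  ultimately show ?thesis by (simp add: UNIV_bool)
qed

lemma expectation_ge_by_weighted_involution:
  fixes M :: "'a pmf" and e :: "'a \<Rightarrow> real"
  assumes "finite \<Omega>" and "set_pmf M \<subseteq> \<Omega>"
    and "\<And>\<omega>. \<omega> \<in> \<Omega> \<Longrightarrow> g \<omega> \<in> \<Omega>" and "\<And>\<omega>. \<omega> \<in> \<Omega> \<Longrightarrow> g (g \<omega>) = \<omega>"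
    and "\<And>\<omega>. \<omega> \<in> \<Omega> \<Longrightarrow> r * pmf M \<omega> \<le> pmf M (g \<omega>)"
    and "\<And>\<omega>. \<omega> \<in> \<Omega> \<Longrightarrow> e (g \<omega>) = 1 - e \<omega>"
    and "\<And>\<omega>. \<omega> \<in> \<Omega> \<Longrightarrow> e \<omega> \<le> 1"
  shows "r * (1 - measure_pmf.expectation M e) \<le> measure_pmf.expectation M e"
proof -
  have expectation: "measure_pmf.expectation M h = (\<Sum>\<omega>\<in>\<Omega>. pmf M \<omega> * h \<omega>)" for h
    using integral_measure_pmf[OF assms(1), of M h] assms(2) by auto
  have "1 - measure_pmf.expectation M e = (\<Sum>\<omega>\<in>\<Omega>. pmf M \<omega> * (1 - e \<omega>))"
    using sum_pmf_eq_1[OF assms(1,2)] by (simp add: expectation algebra_simps sum_subtractf)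
  then have "r * (1 - measure_pmf.expectation M e) = (\<Sum>\<omega>\<in>\<Omega>. r * pmf M \<omega> * (1 - e \<omega>))"
    by (simp add: sum_distrib_left mult.assoc)
  also have "\<dots> \<le> (\<Sum>\<omega>\<in>\<Omega>. pmf M (g \<omega>) * (1 - e \<omega>))"
    using assms(5,7) by (intro sum_mono mult_right_mono) auto
  also have "\<dots> = (\<Sum>\<omega>\<in>\<Omega>. pmf M (g \<omega>) * e (g \<omega>))"
    using assms(6) by simp
  also have "\<dots> = (\<Sum>\<omega>\<in>\<Omega>. pmf M \<omega> * e \<omega>)"
    by (rule sum.reindex_bij_witness[of _ g g]) (use assms(3,4) in auto)
  finally show ?thesis by (simp add: expectation)
qed

definition relabel_flip :: "'a set \<Rightarrow> ('a \<Rightarrow> 'a) \<Rightarrow> 'a set \<Rightarrow> ('a \<Rightarrow> bool) \<Rightarrow> 'a \<Rightarrow> bool" where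
  "relabel_flip D \<sigma> R f q = (q \<in> D \<and> f (\<sigma> q) \<noteq> (q \<in> R))"

lemma relabel_flip_relabel_flip:
  assumes "\<And>q. q \<in> D \<Longrightarrow> \<sigma> q \<in> D" and "\<And>q. q \<in> D \<Longrightarrow> \<sigma> (\<sigma> q) = q"
    and "\<And>q. q \<in> D \<Longrightarrow> \<sigma> q \<in> R \<longleftrightarrow> q \<in> R" and "\<And>q. q \<notin> D \<Longrightarrow> \<not> f q"
  shows "relabel_flip D \<sigma> R (relabel_flip D \<sigma> R f) = f"
proof
  fix q
  show "relabel_flip D \<sigma> R (relabel_flip D \<sigma> R f) q = f q"
    using assms by (cases "q \<in> D") (auto simp: relabel_flip_def)
qed

lemma pmf_Pi_bernoulli_relabel_flip_ge:
  assumes "finite D" and "bij_betw \<sigma> D D" and "R \<subseteq> D" and "0 \<le> p" and "p \<le> 1/2"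
    and "\<And>q. q \<notin> D \<Longrightarrow> \<not> f q"
  shows "(p / (1 - p)) ^ card R * pmf (Pi_pmf D False (\<lambda>_. bernoulli_pmf p)) f
         \<le> pmf (Pi_pmf D False (\<lambda>_. bernoulli_pmf p)) (relabel_flip D \<sigma> R f)"
proof -
  define r where "r = p / (1 - p)"
  let ?b = "pmf (bernoulli_pmf p)"
  have pmf_eq: "pmf (Pi_pmf D False (\<lambda>_. bernoulli_pmf p)) h = (\<Prod>q\<in>D. ?b (h q))"
    if "\<And>q. q \<notin> D \<Longrightarrow> \<not> h q" for h
    using that by (intro pmf_Pi' assms(1)) auto
  have r_nonneg: "0 \<le> r" using assms(4,5) by (simp add: r_def)
  have "p * p \<le> (1 - p) * (1 - p)"
    using assms(4,5) by (intro mult_mono) auto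
  then have "r * p \<le> 1 - p"
    using assms(5) by (simp add: r_def field_simps)
  moreover have "r * (1 - p) = p" using assms(5) by (simp add: r_def)
  ultimately have factor_le: "(if q \<in> R then r else 1) * ?b (f (\<sigma> q)) \<le> ?b (relabel_flip D \<sigma> R f q)"
    if "q \<in> D" for q
    using that assms(4,5) by (cases "f (\<sigma> q)") (auto simp: relabel_flip_def)
  have "(\<Prod>q\<in>D. if q \<in> R then r else 1) = r ^ card R"
    using assms(1,3) by (simp add: prod.If_cases Int_absorb1)
  moreover have "(\<Prod>q\<in>D. ?b (f (\<sigma> q))) = (\<Prod>q\<in>D. ?b (f q))"
    using prod.reindex_bij_betw[OF assms(2)] by simp
  ultimately have "r ^ card R * (\<Prod>q\<in>D. ?b (f q)) = (\<Prod>q\<in>D. (if q \<in> R then r else 1) * ?b (f (\<sigma> q)))"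
    by (simp add: prod.distrib)
  also have "\<dots> \<le> (\<Prod>q\<in>D. ?b (relabel_flip D \<sigma> R f q))"
    using factor_le r_nonneg by (intro prod_mono) auto
  finally show ?thesis
    using assms(6) by (simp add: r_def pmf_eq relabel_flip_def)
qed

definition transpose_pair :: "nat \<Rightarrow> nat \<Rightarrow> nat \<times> nat \<Rightarrow> nat \<times> nat" where
  "transpose_pair x y q =
     (let a = Transposition.transpose x y (fst q); b = Transposition.transpose x y (snd q)
      in (min a b, max a b))"

definition reversed_pairs :: "nat \<Rightarrow> nat \<Rightarrow> nat \<Rightarrow> (nat \<times> nat) set" where
  "reversed_pairs n x y =
     {(a, b) \<in> pairs n. Transposition.transpose x y b < Transposition.transpose x y a}"

definition swap_noise :: "nat \<Rightarrow> nat \<Rightarrow> nat \<Rightarrow> (nat \<times> nat \<Rightarrow> bool) \<Rightarrow> nat \<times> nat \<Rightarrow> bool" where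
  "swap_noise n x y = relabel_flip (pairs n) (transpose_pair x y) (reversed_pairs n x y)"

lemma finite_pairs: "finite (pairs n)"
  by (rule finite_subset[of _ "{1..n} \<times> {1..n}"]) (auto simp: pairs_def)

lemma transpose_in_atLeastAtMost:
  "x \<in> {1..n} \<Longrightarrow> y \<in> {1..n} \<Longrightarrow> u \<in> {1..n} \<Longrightarrow> Transposition.transpose x y u \<in> {1..n}"
  by (auto simp: Transposition.transpose_def)

lemma transpose_pair_in_pairs:
  assumes "x \<in> {1..n}" "y \<in> {1..n}" "q \<in> pairs n"
  shows "transpose_pair x y q \<in> pairs n"
proof -
  obtain a b where "q = (a, b)" "a \<in> {1..n}" "b \<in> {1..n}" "a < b"
    using assms(3) by (auto simp: pairs_def)
  moreover have "Transposition.transpose x y a \<noteq> Transposition.transpose x y b"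
    using \<open>a < b\<close> by (metis transpose_involutory less_irrefl)
  ultimately show ?thesis
    using transpose_in_atLeastAtMost[OF assms(1,2)]
    by (fastforce simp: transpose_pair_def Let_def pairs_def min_def max_def)
qed

lemma transpose_pair_transpose_pair:
  assumes "q \<in> pairs n"
  shows "transpose_pair x y (transpose_pair x y q) = q"
  using assms by (auto simp: transpose_pair_def Let_def pairs_def min_def max_def)

lemma transpose_pair_in_reversed_pairs_iff:
  assumes "x \<in> {1..n}" "y \<in> {1..n}" "q \<in> pairs n"
  shows "transpose_pair x y q \<in> reversed_pairs n x y \<longleftrightarrow> q \<in> reversed_pairs n x y"
  using transpose_pair_in_pairs[OF assms] assms(3)
  by (auto simp: reversed_pairs_def transpose_pair_def Let_def pairs_def min_def max_def)

lemma card_reversed_pairs_le: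
  assumes "x < y"
  shows "card (reversed_pairs n x y) \<le> 2 * (y - x) - 1"
proof -
  have "reversed_pairs n x y \<subseteq> insert (x, y) (Pair x ` {x<..<y} \<union> (\<lambda>z. (z, y)) ` {x<..<y})"
    using assms by (auto simp: reversed_pairs_def pairs_def Transposition.transpose_def split: if_splits)
  then have "card (reversed_pairs n x y) \<le> card (insert (x, y) (Pair x ` {x<..<y} \<union> (\<lambda>z. (z, y)) ` {x<..<y}))"
    by (rule card_mono[rotated]) auto
  also have "\<dots> \<le> 1 + (card (Pair x ` {x<..<y}) + card ((\<lambda>z. (z, y)) ` {x<..<y}))"
    using card_Un_le[of "Pair x ` {x<..<y}" "(\<lambda>z. (z, y)) ` {x<..<y}"]
    by (simp add: card_insert_if)
  also have "\<dots> \<le> 1 + (card {x<..<y} + card {x<..<y})"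
    by (intro add_mono card_image_le) auto
  also have "\<dots> = 2 * (y - x) - 1"
    using assms by simp
  finally show ?thesis .
qed

definition reports_less :: "(nat \<times> nat \<Rightarrow> bool) \<Rightarrow> nat \<Rightarrow> nat \<Rightarrow> bool" where
  "reports_less flip u v = (if u < v then \<not> flip (u, v) else flip (v, u))"

lemma observed_eq_reports_less:
  "observed n \<pi> flip a b = (a \<in> {1..n} \<and> b \<in> {1..n} \<and> a \<noteq> b \<and> reports_less flip (\<pi> a) (\<pi> b))"
  by (simp add: observed_def reports_less_def)

lemma reports_less_swap_noise:
  assumes "x \<in> {1..n}" "y \<in> {1..n}" "u \<in> {1..n}" "v \<in> {1..n}" "u \<noteq> v"
  shows "reports_less (swap_noise n x y flip) (Transposition.transpose x y u) (Transposition.transpose x y v)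
         = reports_less flip u v"
proof -
  let ?t = "Transposition.transpose x y"
  have "?t u \<in> {1..n}" "?t v \<in> {1..n}"
    using transpose_in_atLeastAtMost[OF assms(1,2)] assms(3,4) by auto
  moreover have "?t u \<noteq> ?t v"
    using assms(5) by (metis transpose_involutory)
  ultimately show ?thesis
    using assms(3-5)
    by (cases "?t u < ?t v")
      (auto simp: reports_less_def swap_noise_def relabel_flip_def transpose_pair_def Let_def
        reversed_pairs_def pairs_def min_def max_def)
qed

lemma observed_swap_noise:
  assumes "x \<in> {1..n}" "y \<in> {1..n}" "\<pi> permutes {1..n}"
  shows "observed n (Transposition.transpose x y \<circ> \<pi>) (swap_noise n x y flip) = observed n \<pi> flip"
proof (intro ext)
  fix a b
  have "\<pi> a \<in> {1..n}" "\<pi> b \<in> {1..n}" if "a \<in> {1..n}" "b \<in> {1..n}"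
    using that permutes_in_image[OF assms(3)] by auto
  moreover have "\<pi> a \<noteq> \<pi> b" if "a \<noteq> b"
    using that permutes_inj[OF assms(3)] by (auto dest: injD)
  ultimately show "observed n (Transposition.transpose x y \<circ> \<pi>) (swap_noise n x y flip) a b
    = observed n \<pi> flip a b"
    using reports_less_swap_noise[OF assms(1,2)] by (auto simp: observed_eq_reports_less)
qed

type_synonym sorting_instance = "(nat \<Rightarrow> nat) \<times> (nat \<times> nat \<Rightarrow> bool)"

definition instances :: "nat \<Rightarrow> sorting_instance set" where
  "instances n = {\<pi>. \<pi> permutes {1..n}} \<times> {flip. \<forall>q. q \<notin> pairs n \<longrightarrow> \<not> flip q}"

definition swap_instance :: "nat \<Rightarrow> nat \<Rightarrow> nat \<Rightarrow> sorting_instance \<Rightarrow> sorting_instance" where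
  "swap_instance n x y = (\<lambda>(\<pi>, flip). (Transposition.transpose x y \<circ> \<pi>, swap_noise n x y flip))"

definition conditional_error ::
  "nat \<Rightarrow> ((nat \<Rightarrow> nat \<Rightarrow> bool) \<Rightarrow> nat list pmf) \<Rightarrow> nat \<Rightarrow> nat \<Rightarrow> sorting_instance \<Rightarrow> real" where
  "conditional_error n A x y = (\<lambda>(\<pi>, flip).
     pmf (map_pmf (\<lambda>out. wrong_order (map \<pi> out) x y) (A (observed n \<pi> flip))) True)"

lemma finite_instances: "finite (instances n)"
proof -
  have "{flip. \<forall>q. q \<notin> pairs n \<longrightarrow> \<not> flip q} = PiE_dflt (pairs n) False (\<lambda>_. UNIV)"
    by (auto simp: PiE_dflt_def)
  then show ?thesis
    using finite_permutations[of "{1..n}"] finite_pairs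
    by (auto simp: instances_def intro!: finite_PiE_dflt)
qed

lemma permutations_nonempty: "{\<pi>. \<pi> permutes S} \<noteq> {}"
  using permutes_id by blast

lemma pmf_input_pmf:
  assumes "\<pi> permutes {1..n}"
  shows "pmf (input_pmf n) \<pi> = 1 / fact n"
proof -
  have "card {\<pi>. \<pi> permutes {1..n}} = fact n"
    by (rule card_permutations) auto
  then show ?thesis
    unfolding input_pmf_def
    by (subst pmf_of_set[OF permutations_nonempty finite_permutations]) (use assms in auto)
qed

lemma set_pmf_instances_subset:
  "set_pmf (pair_pmf (input_pmf n) (noise_pmf n p)) \<subseteq> instances n"
proof -
  have "set_pmf (input_pmf n) = {\<pi>. \<pi> permutes {1..n}}"
    unfolding input_pmf_def
    by (rule set_pmf_of_set[OF permutations_nonempty finite_permutations[OF finite_atLeastAtMost]])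
  then show ?thesis
    using set_Pi_pmf_subset[OF finite_pairs, of n False "\<lambda>_. bernoulli_pmf p"]
    by (auto simp: instances_def noise_pmf_def)
qed

lemma swap_instance_in_instances:
  assumes "x \<in> {1..n}" "y \<in> {1..n}" "\<omega> \<in> instances n"
  shows "swap_instance n x y \<omega> \<in> instances n"
  using assms permutes_compose[OF _ permutes_swap_id[OF assms(1,2)]]
  by (auto simp: instances_def swap_instance_def swap_noise_def relabel_flip_def)

lemma swap_instance_swap_instance:
  assumes "x \<in> {1..n}" "y \<in> {1..n}" "\<omega> \<in> instances n"
  shows "swap_instance n x y (swap_instance n x y \<omega>) = \<omega>"
proof -
  obtain \<pi> flip where \<omega>: "\<omega> = (\<pi>, flip)" and "\<forall>q. q \<notin> pairs n \<longrightarrow> \<not> flip q"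
    using assms(3) by (auto simp: instances_def)
  then have "swap_noise n x y (swap_noise n x y flip) = flip"
    unfolding swap_noise_def
    by (intro relabel_flip_relabel_flip transpose_pair_in_pairs transpose_pair_transpose_pair
        transpose_pair_in_reversed_pairs_iff assms(1,2)) auto
  then show ?thesis
    by (simp add: \<omega> swap_instance_def fun_eq_iff)
qed

lemma pmf_noise_swap_noise_ge:
  assumes "0 < p" "p < 1/2" "x \<in> {1..n}" "y \<in> {1..n}" "x < y"
    and "\<And>q. q \<notin> pairs n \<Longrightarrow> \<not> flip q"
  shows "(p / (1 - p)) ^ (2 * (y - x) - 1) * pmf (noise_pmf n p) flip
         \<le> pmf (noise_pmf n p) (swap_noise n x y flip)"
proof -
  define r where "r = p / (1 - p)"
  have "bij_betw (transpose_pair x y) (pairs n) (pairs n)"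
    using transpose_pair_in_pairs[OF assms(3,4)] transpose_pair_transpose_pair
    by (intro bij_betw_byWitness[where f' = "transpose_pair x y"]) auto
  then have "r ^ card (reversed_pairs n x y) * pmf (noise_pmf n p) flip
      \<le> pmf (noise_pmf n p) (swap_noise n x y flip)"
    unfolding noise_pmf_def swap_noise_def r_def using assms(1,2,6)
    by (intro pmf_Pi_bernoulli_relabel_flip_ge finite_pairs) (auto simp: reversed_pairs_def)
  moreover have "r ^ (2 * (y - x) - 1) \<le> r ^ card (reversed_pairs n x y)"
    using card_reversed_pairs_le[OF assms(5)] assms(1,2) by (intro power_decreasing) (auto simp: r_def)
  ultimately show ?thesis
    unfolding r_def[symmetric] by (meson mult_right_mono order_trans pmf_nonneg)
qed

lemma pmf_swap_instance_ge:
  assumes "0 < p" "p < 1/2" "x \<in> {1..n}" "y \<in> {1..n}" "x < y" "\<omega> \<in> instances n"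
  shows "(p / (1 - p)) ^ (2 * (y - x) - 1) * pmf (pair_pmf (input_pmf n) (noise_pmf n p)) \<omega>
         \<le> pmf (pair_pmf (input_pmf n) (noise_pmf n p)) (swap_instance n x y \<omega>)"
proof -
  obtain \<pi> flip where \<omega>: "\<omega> = (\<pi>, flip)" and \<pi>: "\<pi> permutes {1..n}"
    and flip: "\<And>q. q \<notin> pairs n \<Longrightarrow> \<not> flip q"
    using assms(6) by (auto simp: instances_def)
  have "pmf (input_pmf n) (Transposition.transpose x y \<circ> \<pi>) = pmf (input_pmf n) \<pi>"
    using \<pi> permutes_compose[OF \<pi> permutes_swap_id[OF assms(3,4)]] by (simp add: pmf_input_pmf)
  then show ?thesis
    using pmf_noise_swap_noise_ge[OF assms(1-5) flip]
    by (simp add: \<omega> swap_instance_def pmf_pair mult.left_commute mult_left_mono)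
qed

lemma conditional_error_swap_instance:
  assumes "x \<in> {1..n}" "y \<in> {1..n}" "x \<noteq> y" "\<omega> \<in> instances n"
    and "\<And>T out. out \<in> set_pmf (A T) \<Longrightarrow> distinct out \<and> set out = {1..n}"
  shows "conditional_error n A x y (swap_instance n x y \<omega>) = 1 - conditional_error n A x y \<omega>"
proof -
  obtain \<pi> flip where \<omega>: "\<omega> = (\<pi>, flip)" and \<pi>: "\<pi> permutes {1..n}"
    using assms(4) by (auto simp: instances_def)
  have "wrong_order (map (Transposition.transpose x y \<circ> \<pi>) out) x y \<longleftrightarrow> \<not> wrong_order (map \<pi> out) x y"
    if "out \<in> set_pmf (A (observed n \<pi> flip))" for out
  proof -
    have "distinct (map \<pi> out)" "set (map \<pi> out) = {1..n}"
      using assms(5)[OF that] permutes_inj_on[OF \<pi>] permutes_image[OF \<pi>] by (auto simp: distinct_map)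
    then show ?thesis
      unfolding map_map[symmetric] using assms(1-3) by (intro wrong_order_map_transpose) auto
  qed
  then show ?thesis
    unfolding \<omega> conditional_error_def swap_instance_def
    by (simp add: observed_swap_noise[OF assms(1,2) \<pi>] pmf_map_pmf_True_complement)
qed

lemma error_prob_eq_expectation:
  "error_prob n p A x y
     = measure_pmf.expectation (pair_pmf (input_pmf n) (noise_pmf n p)) (conditional_error n A x y)"
proof -
  have "error_prob n p A x y
      = pmf (pair_pmf (input_pmf n) (noise_pmf n p) \<bind>
          (\<lambda>(\<pi>, flip). map_pmf (\<lambda>out. wrong_order (map \<pi> out) x y) (A (observed n \<pi> flip)))) True"
    by (simp add: error_prob_def measure_pmf_single pair_pmf_def map_pmf_def bind_assoc_pmf bind_return_pmf)
  then show ?thesis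
    by (simp add: pmf_bind conditional_error_def case_prod_beta')
qed

theorem lemma6p1:
  fixes n x y :: nat and p :: real
    and A :: "(nat \<Rightarrow> nat \<Rightarrow> bool) \<Rightarrow> nat list pmf"
  assumes "0 < p" and "p < 1/2"
    and "x \<in> {1..n}" and "y \<in> {1..n}" and "x < y"
    and "\<And>T out. out \<in> set_pmf (A T) \<Longrightarrow> distinct out \<and> set out = {1..n}"
  shows "error_prob n p A x y \<ge> (1/2) * (p / (1 - p)) ^ (2 * (y - x) - 1)"
proof -
  define r where "r = (p / (1 - p)) ^ (2 * (y - x) - 1)"
  have "r * (1 - error_prob n p A x y) \<le> error_prob n p A x y"
    unfolding error_prob_eq_expectation r_def
  proof (rule expectation_ge_by_weighted_involution[OF finite_instances set_pmf_instances_subset])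
    fix \<omega> assume \<omega>: "\<omega> \<in> instances n"
    show "swap_instance n x y \<omega> \<in> instances n"
      by (rule swap_instance_in_instances[OF assms(3,4) \<omega>])
    show "swap_instance n x y (swap_instance n x y \<omega>) = \<omega>"
      by (rule swap_instance_swap_instance[OF assms(3,4) \<omega>])
    show "(p / (1 - p)) ^ (2 * (y - x) - 1) * pmf (pair_pmf (input_pmf n) (noise_pmf n p)) \<omega>
        \<le> pmf (pair_pmf (input_pmf n) (noise_pmf n p)) (swap_instance n x y \<omega>)"
      by (rule pmf_swap_instance_ge[OF assms(1-5) \<omega>])
    show "conditional_error n A x y (swap_instance n x y \<omega>) = 1 - conditional_error n A x y \<omega>"
      using assms(3-5) \<omega> assms(6) by (intro conditional_error_swap_instance) auto
    show "conditional_error n A x y \<omega> \<le> 1"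
      by (simp add: conditional_error_def case_prod_beta' pmf_le_1)
  qed
  moreover have "r * error_prob n p A x y \<le> error_prob n p A x y"
    using assms(1,2) by (intro mult_left_le_one_le) (auto simp: r_def error_prob_def power_le_one)
  ultimately show ?thesis
    unfolding r_def[symmetric] right_diff_distrib by linarith
qed

end
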